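(* For positive integers $D_1,D_2$ and an integer $u$, let \[ \mathcal{R}'(u,D_1,D_2)=\max_{\substack{(a,D_1)=1\\(b,D_2)=1}}\ \sum_{t\bmod D_1}\big|\widehat S(a,bu,t,1;D_1,D_2)\big|. \] Then $\mathcal{R}'(u,D_1,D_2)=\mathcal{R}(u,D_2,D_1)$.
   Context: Notation: $e(x)=e^{2\pi ix}$. For integers $m_1,m_2,n_1,n_2$ and positive integers $D_1,D_2$, the $GL_3$ Kloosterman sum is \[ S(m_1,m_2,n_1,n_2;D_1,D_2)=\sum e\Big(\frac{m_1B_1+n_1(Y_1D_2-Z_1B_2)}{D_1}\Big)e\Big(\frac{m_2B_2+n_2(Y_2D_1-Z_2B_1)}{D_2}\Big), \] the sum over $B_1,C_1 \bmod D_1$, $B_2,C_2\bmod D_2$ with $\gcd(B_1,C_1,D_1)=\gcd(B_2,C_2,D_2)=1$ and $D_1C_2+B_1B_2+C_1D_2\equiv 0\pmod{D_1D_2}$, where $Y_1B_1+Z_1C_1\equiv 1\pmod{D_1}$, $Y_2B_2+Z_2C_2\equiv1\pmod{D_2}$ (independent of choices). For integers $a,b$ with $(a,D_1)=(b,D_2)=1$ and integers $u,t$, \[ \widehat S(a,u,t,b;D_1,D_2)=\frac{1}{D_1D_2}\sum_{x\bmod D_1}\sum_{y\bmod D_2}S(a,y,x,b;D_1,D_2)\,e\Big(\frac{-xt}{D_1}\Big)e\Big(\frac{-yu}{D_2}\Big), \] and $\mathcal{R}(t,D_1,D_2)=\max_{(ab,D_1)=1}\sum_{u\bmod D_2}|\widehat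 S(a,u,bt,1;D_1,D_2)|$ (maximum over integers $a,b$ coprime to $D_1$). *)

theory Defs
  imports "HOL-Analysis.Analysis" "HOL-Number_Theory.Number_Theory"
begin

definition ee :: "real \<Rightarrow> complex" where
  "ee x = exp (2 * of_real pi * \<i> * of_real x)"

text \<open>A choice of (Y, Z) with Y*B + Z*C = 1 mod D (exists when gcd(B,C,D) = 1;
  the Kloosterman sum is independent of the choice).\<close>
definition bezout_pair :: "int \<Rightarrow> int \<Rightarrow> int \<Rightarrow> int \<times> int" where
  "bezout_pair B C D = (SOME (Y, Z). [Y * B + Z * C = 1] (mod D))"

definition kl_index :: "int \<Rightarrow> int \<Rightarrow> (int \<times> int \<times> int \<times> int) set" where
  "kl_index D1 D2 = {(B1, C1, B2, C2).
      B1 \<in> {0..<D1} \<and> C1 \<in> {0..<D1} \<and> B2 \<in> {0..<D2} \<and> C2 \<in> {0..<D2} \<and>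
      gcd B1 (gcd C1 D1) = 1 \<and> gcd B2 (gcd C2 D2) = 1 \<and>
      [D1 * C2 + B1 * B2 + C1 * D2 = 0] (mod (D1 * D2))}"

definition kl3 :: "int \<Rightarrow> int \<Rightarrow> int \<Rightarrow> int \<Rightarrow> int \<Rightarrow> int \<Rightarrow> complex" where
  "kl3 m1 m2 n1 n2 D1 D2 =
    (\<Sum>(B1, C1, B2, C2) \<in> kl_index D1 D2.
       let (Y1, Z1) = bezout_pair B1 C1 D1; (Y2, Z2) = bezout_pair B2 C2 D2 in
       ee (of_int (m1 * B1 + n1 * (Y1 * D2 - Z1 * B2)) / of_int D1) *
       ee (of_int (m2 * B2 + n2 * (Y2 * D1 - Z2 * B1)) / of_int D2))"

definition kl3_hat :: "int \<Rightarrow> int \<Rightarrow> int \<Rightarrow> int \<Rightarrow> int \<Rightarrow> int \<Rightarrow> complex" where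
  "kl3_hat a u t b D1 D2 =
    (1 / of_int (D1 * D2)) *
    (\<Sum>x\<in>{0..<D1}. \<Sum>y\<in>{0..<D2}.
       kl3 a y x b D1 D2 * ee (of_int (- x * t) / of_int D1) * ee (of_int (- y * u) / of_int D2))"

definition RR :: "int \<Rightarrow> int \<Rightarrow> int \<Rightarrow> real" where
  "RR t D1 D2 = Max {(\<Sum>u\<in>{0..<D2}. cmod (kl3_hat a u (b * t) 1 D1 D2)) | a b.
                       coprime a D1 \<and> coprime b D1}"

definition RR' :: "int \<Rightarrow> int \<Rightarrow> int \<Rightarrow> real" where
  "RR' u D1 D2 = Max {(\<Sum>t\<in>{0..<D1}. cmod (kl3_hat a (b * u) t 1 D1 D2)) | a b.
                       coprime a D1 \<and> coprime b D2}"

end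

theory Submission
  imports Defs
begin

text \<open>
  Write \<open>\<lambda>\<^sub>1 \<equiv> Y\<^sub>1D\<^sub>2 - Z\<^sub>1B\<^sub>2 (mod D\<^sub>1)\<close> and \<open>\<lambda>\<^sub>2 \<equiv> Y\<^sub>2D\<^sub>1 - Z\<^sub>2B\<^sub>1 (mod D\<^sub>2)\<close>
  for the residues in the phases of the Kloosterman sum. By orthogonality of additive
  characters, \<open>\<widehat>S(a,u,t,b;D\<^sub>1,D\<^sub>2)\<close> is the sum of \<open>e(aB\<^sub>1/D\<^sub>1) e(b\<lambda>\<^sub>2/D\<^sub>2)\<close> over
  the index tuples with \<open>B\<^sub>2 \<equiv> u\<close> and \<open>\<lambda>\<^sub>1 \<equiv> t\<close>, so it only depends on how the key
  \<open>(B\<^sub>1, B\<^sub>2, \<lambda>\<^sub>1, \<lambda>\<^sub>2)\<close> is distributed over the index set. Three bijections of the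
  index set transform the key in a controlled way: exchanging \<open>D\<^sub>1\<close> and \<open>D\<^sub>2\<close>, the
  duality \<open>(B\<^sub>1, B\<^sub>2, \<lambda>\<^sub>1, \<lambda>\<^sub>2) \<mapsto> (\<lambda>\<^sub>1, \<lambda>\<^sub>2, B\<^sub>1, B\<^sub>2)\<close>, and the torus action
  \<open>(B\<^sub>1, \<lambda>\<^sub>1) \<mapsto> (aB\<^sub>1, a\<^sup>-\<^sup>1\<lambda>\<^sub>1)\<close>. They give \<open>\<widehat>S(a,u,t,1;D\<^sub>1,D\<^sub>2) = \<widehat>S(1,u,a\<^sup>-\<^sup>1t,1;D\<^sub>1,D\<^sub>2)\<close>
  and \<open>\<widehat>S(1,t,u,1;D\<^sub>2,D\<^sub>1) = \<widehat>S(1,u,t,1;D\<^sub>1,D\<^sub>2)\<close>; summing over \<open>t\<close>, both maxima run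
  over the same set of values.
\<close>

lemma ee_add: "ee (x + y) = ee x * ee y"
  unfolding ee_def by (simp add: distrib_left exp_add)

lemma ee_of_int: "ee (of_int n) = 1"
proof -
  have "2 * of_real pi * \<i> * of_real (of_int n) = \<i> * (of_int n * (of_real pi * 2))"
    by simp
  then show ?thesis unfolding ee_def by (metis exp_2pi_1_int)
qed

lemma ee_of_nat_mult: "ee (of_nat n * x) = ee x ^ n"
proof -
  have "ee (of_nat n * x) = exp (of_nat n * (2 * of_real pi * \<i> * of_real x))"
    unfolding ee_def by (simp add: algebra_simps)
  then show ?thesis unfolding ee_def by (simp add: exp_of_nat_mult)
qed

lemma ee_eq_1_imp_Ints: "ee x = 1 \<Longrightarrow> x \<in> \<int>"
proof -
  assume "ee x = 1"
  then obtain n :: int where "Im (2 * of_real pi * \<i> * of_real x) = of_int (2 * n) * pi"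
    unfolding ee_def exp_eq_1 by blast
  then have "x = n" by simp
  then show ?thesis by simp
qed

lemma ee_cong:
  assumes "[m = m'] (mod D)"
  shows "ee (of_int m / of_int D) = ee (of_int m' / of_int D)"
proof (cases "D = 0")
  case True
  then show ?thesis using assms by simp
next
  case False
  obtain k where "m' = m + D * k" using assms by (metis cong_iff_lin cong_sym)
  then have "of_int m' / of_int D = of_int m / of_int D + (of_int k :: real)"
    using False by (simp add: field_simps)
  then show ?thesis by (simp add: ee_add ee_of_int)
qed

lemma sum_ee_mult_div:
  assumes "D > 0"
  shows "(\<Sum>x\<in>{0..<D}. ee (of_int (x * k) / of_int D)) = (if D dvd k then of_int D else 0)"
proof -
  define w where "w = ee (of_int k / of_int D)"
  have "(\<Sum>x\<in>{0..<D}. ee (of_int (x * k) / of_int D)) = (\<Sum>i<nat D. ee (of_int (int i * k) / of_int D))"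
  proof -
    have "{0..<D} = int ` {..<nat D}" using assms by (auto simp: image_iff intro!: bexI[of _ "nat _"])
    then show ?thesis by (simp add: sum.reindex)
  qed
  also have "\<dots> = (\<Sum>i<nat D. w ^ i)"
    unfolding w_def by (rule sum.cong) (simp_all flip: ee_of_nat_mult)
  also have "\<dots> = (if D dvd k then of_int D else 0)"
  proof (cases "D dvd k")
    case True
    then have "w = 1" unfolding w_def using assms by (auto simp: ee_of_int)
    then show ?thesis using True assms by simp
  next
    case False
    have "w \<noteq> 1"
    proof
      assume "w = 1"
      then have "of_int k / of_int D \<in> (\<int> :: real set)" unfolding w_def by (rule ee_eq_1_imp_Ints)
      then obtain j where "of_int k / of_int D = (of_int j :: real)" by (metis Ints_cases)
      then have "of_int k = (of_int (D * j) :: real)" using assms by (simp add: field_simps)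
      then have "k = D * j" by (simp only: of_int_eq_iff)
      then show False using False by simp
    qed
    moreover have "w ^ nat D = 1"
      unfolding w_def using assms by (simp flip: ee_of_nat_mult add: ee_of_int)
    ultimately show ?thesis using False by (simp add: sum_gp_strict)
  qed
  finally show ?thesis .
qed

lemma dvd_mod_mult_add_iff:
  fixes a b c n :: int
  shows "n dvd (a mod n) * b + c \<longleftrightarrow> n dvd a * b + c"
proof -
  have "((a mod n) * b + c) mod n = (a * b + c) mod n"
    by (intro mod_add_cong mod_mult_cong) simp_all
  then show ?thesis by (simp add: dvd_eq_mod_eq_0)
qed

lemma dvd_mod_mult_diff_iff:
  fixes a b c n :: int
  shows "n dvd (a mod n) * b - c \<longleftrightarrow> n dvd a * b - c"
  using dvd_mod_mult_add_iff[where c = "- c"] by simp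

lemma mod_mult_inverse_cancel:
  fixes a a' x n :: int
  assumes "[a * a' = 1] (mod n)" "0 \<le> x" "x < n"
  shows "(a' * ((a * x) mod n)) mod n = x"
proof -
  from assms(1) have "[a' * (a * x) = 1 * x] (mod n)" by (metis cong_scalar_right mult.assoc mult.commute)
  then show ?thesis using assms(2,3) by (simp add: cong_def mod_mult_right_eq)
qed

lemma gcd3_eq_1I:
  fixes b c n :: int
  assumes "\<And>d. d dvd b \<Longrightarrow> d dvd c \<Longrightarrow> d dvd n \<Longrightarrow> d dvd 1"
  shows "gcd b (gcd c n) = 1"
proof -
  have "gcd b (gcd c n) dvd 1" by (rule assms) (meson dvd_trans gcd_dvd1 gcd_dvd2)+
  then show ?thesis by simp
qed

lemma gcd3_eq_1D:
  fixes b c n :: int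
  assumes "gcd b (gcd c n) = 1" "d dvd b" "d dvd c" "d dvd n"
  shows "d dvd 1"
  using assms by (metis gcd_greatest)

lemma bezout3_int:
  fixes b c n :: int
  assumes "gcd b (gcd c n) = 1"
  obtains y z w where "y * b + z * c + w * n = 1"
proof -
  obtain u v where uv: "u * b + v * gcd c n = 1" using bezout_int[of b "gcd c n"] assms by auto
  obtain p q where "p * c + q * n = gcd c n" using bezout_int[of c n] by auto
  with uv have "u * b + v * (p * c + q * n) = 1" by simp
  then have "u * b + (v * p) * c + (v * q) * n = 1" by (simp add: algebra_simps)
  then show thesis by (rule that)
qed

lemma bezout_pair_dvd:
  assumes "gcd b (gcd c n) = 1"
  shows "n dvd fst (bezout_pair b c n) * b + snd (bezout_pair b c n) * c - 1"
proof -
  obtain y z w where "y * b + z * c + w * n = 1" using bezout3_int[OF assms] .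
  then have "[y * b + z * c = 1] (mod n)" by (metis cong_iff_lin cong_sym mult.commute)
  then have "\<exists>p. (\<lambda>(y, z). [y * b + z * c = 1] (mod n)) p" by auto
  then have "(\<lambda>(y, z). [y * b + z * c = 1] (mod n)) (bezout_pair b c n)"
    unfolding bezout_pair_def by (rule someI_ex)
  then show ?thesis by (simp add: split_beta cong_iff_dvd_diff)
qed

text \<open>
  It is the
  unique residue \<open>\<lambda>\<close> with \<open>\<lambda>B \<equiv> D'\<close> and \<open>\<lambda>C \<equiv> -B' (mod D)\<close>, so the arbitrary choice made
  by \<open>bezout_pair\<close> does not matter.
\<close>
definition kl_lambda :: "int \<Rightarrow> int \<Rightarrow> int \<Rightarrow> int \<Rightarrow> int \<Rightarrow> int" where
  "kl_lambda D D' B C B' = (fst (bezout_pair B C D) * D' - snd (bezout_pair B C D) * B') mod D"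

lemma kl_lambda_bounds:
  assumes "D > 0"
  shows "0 \<le> kl_lambda D D' B C B'" "kl_lambda D D' B C B' < D"
  unfolding kl_lambda_def using assms by simp_all

lemma kl_lambda_dvd:
  assumes "gcd B (gcd C D) = 1" "D dvd B * B' + C * D'"
  shows "D dvd kl_lambda D D' B C B' * B - D'" "D dvd kl_lambda D D' B C B' * C + B'"
proof -
  define Y where "Y = fst (bezout_pair B C D)"
  define Z where "Z = snd (bezout_pair B C D)"
  have YZ: "D dvd Y * B + Z * C - 1" unfolding Y_def Z_def by (rule bezout_pair_dvd[OF assms(1)])
  have "(Y * D' - Z * B') * B - D' = D' * (Y * B + Z * C - 1) - Z * (B * B' + C * D')"
    by (simp add: algebra_simps)
  then have "D dvd (Y * D' - Z * B') * B - D'" using YZ assms(2) by (metis dvd_diff dvd_mult)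
  then show "D dvd kl_lambda D D' B C B' * B - D'"
    unfolding kl_lambda_def Y_def Z_def by (simp only: dvd_mod_mult_diff_iff)
  have "(Y * D' - Z * B') * C + B' = Y * (B * B' + C * D') - B' * (Y * B + Z * C - 1)"
    by (simp add: algebra_simps)
  then have "D dvd (Y * D' - Z * B') * C + B'" using YZ assms(2) by (metis dvd_diff dvd_mult)
  then show "D dvd kl_lambda D D' B C B' * C + B'"
    unfolding kl_lambda_def Y_def Z_def by (simp only: dvd_mod_mult_add_iff)
qed

lemma kl_lambda_eqI:
  assumes "gcd B (gcd C D) = 1" "0 \<le> l" "l < D" "D dvd l * B - D'" "D dvd l * C + B'"
  shows "kl_lambda D D' B C B' = l"
proof -
  define Y where "Y = fst (bezout_pair B C D)"
  define Z where "Z = snd (bezout_pair B C D)"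
  have YZ: "D dvd Y * B + Z * C - 1" unfolding Y_def Z_def by (rule bezout_pair_dvd[OF assms(1)])
  have "l - (Y * D' - Z * B') = Y * (l * B - D') + Z * (l * C + B') - l * (Y * B + Z * C - 1)"
    by (simp add: algebra_simps)
  then have "D dvd l - (Y * D' - Z * B')" using YZ assms(4,5) by (metis dvd_add dvd_diff dvd_mult)
  then have "l mod D = (Y * D' - Z * B') mod D" by (simp add: mod_eq_dvd_iff)
  then show ?thesis using assms(2,3) unfolding kl_lambda_def Y_def Z_def by simp
qed

definition kl_key :: "int \<Rightarrow> int \<Rightarrow> int \<times> int \<times> int \<times> int \<Rightarrow> int \<times> int \<times> int \<times> int" where
  "kl_key D1 D2 = (\<lambda>(B1, C1, B2, C2). (B1, B2, kl_lambda D1 D2 B1 C1 B2, kl_lambda D2 D1 B2 C2 B1))"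

lemma kl_index_iff:
  "(B1, C1, B2, C2) \<in> kl_index D1 D2 \<longleftrightarrow>
   0 \<le> B1 \<and> B1 < D1 \<and> 0 \<le> C1 \<and> C1 < D1 \<and> 0 \<le> B2 \<and> B2 < D2 \<and> 0 \<le> C2 \<and> C2 < D2 \<and>
   gcd B1 (gcd C1 D1) = 1 \<and> gcd B2 (gcd C2 D2) = 1 \<and> D1 * D2 dvd D1 * C2 + B1 * B2 + C1 * D2"
  unfolding kl_index_def by (auto simp: cong_0_iff)

lemma kl_index_lambda_dvd:
  assumes "(B1, C1, B2, C2) \<in> kl_index D1 D2"
  defines "L1 \<equiv> kl_lambda D1 D2 B1 C1 B2" and "L2 \<equiv> kl_lambda D2 D1 B2 C2 B1"
  shows "D1 dvd L1 * B1 - D2" "D1 dvd L1 * C1 + B2" "D2 dvd L2 * B2 - D1" "D2 dvd L2 * C2 + B1"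
proof -
  have g: "gcd B1 (gcd C1 D1) = 1" "gcd B2 (gcd C2 D2) = 1"
    and cp: "D1 * D2 dvd D1 * C2 + B1 * B2 + C1 * D2" using assms(1) unfolding kl_index_iff by auto
  have "D1 dvd B1 * B2 + C1 * D2"
    using dvd_mult_left[OF cp] by (metis add.assoc dvd_add_right_iff dvd_triv_left)
  then show "D1 dvd L1 * B1 - D2" "D1 dvd L1 * C1 + B2"
    unfolding L1_def using kl_lambda_dvd[OF g(1)] by auto
  have "D2 dvd B2 * B1 + C2 * D1"
    using dvd_mult_right[OF cp] by (metis add.commute dvd_add_right_iff dvd_triv_right mult.commute)
  then show "D2 dvd L2 * B2 - D1" "D2 dvd L2 * C2 + B1"
    unfolding L2_def using kl_lambda_dvd[OF g(2)] by auto
qed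

lemma kl_index_C2_unique:
  assumes "(B1, C1, B2, C2) \<in> kl_index D1 D2" "(B1, C1, B2, C2') \<in> kl_index D1 D2" "D1 > 0"
  shows "C2 = C2'"
proof -
  have "D1 * D2 dvd (D1 * C2 + B1 * B2 + C1 * D2) - (D1 * C2' + B1 * B2 + C1 * D2)"
    using assms(1,2) unfolding kl_index_iff by (blast intro: dvd_diff)
  then have "D1 * D2 dvd D1 * (C2 - C2')" by (simp add: algebra_simps)
  then have "C2 mod D2 = C2' mod D2" using assms(3) by (simp add: mod_eq_dvd_iff)
  then show ?thesis using assms(1,2) unfolding kl_index_iff by simp
qed

lemma kl3_eq_sum_kl_key:
  "kl3 m1 m2 n1 n2 D1 D2 = (\<Sum>x\<in>kl_index D1 D2. case kl_key D1 D2 x of (B1, B2, L1, L2) \<Rightarrow>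
     ee (of_int (m1 * B1 + n1 * L1) / of_int D1) * ee (of_int (m2 * B2 + n2 * L2) / of_int D2))"
  unfolding kl3_def
proof (rule sum.cong, simp, clarify)
  fix B1 C1 B2 C2
  have "ee (of_int (m1 * B1 + n1 * kl_lambda D1 D2 B1 C1 B2) / of_int D1)
      = ee (of_int (m1 * B1 + n1 * (fst (bezout_pair B1 C1 D1) * D2 - snd (bezout_pair B1 C1 D1) * B2)) / of_int D1)"
    by (rule ee_cong) (unfold kl_lambda_def cong_def, metis mod_add_right_eq mod_mult_right_eq)
  moreover have "ee (of_int (m2 * B2 + n2 * kl_lambda D2 D1 B2 C2 B1) / of_int D2)
      = ee (of_int (m2 * B2 + n2 * (fst (bezout_pair B2 C2 D2) * D1 - snd (bezout_pair B2 C2 D2) * B1)) / of_int D2)"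
    by (rule ee_cong) (unfold kl_lambda_def cong_def, metis mod_add_right_eq mod_mult_right_eq)
  ultimately show "(let (Y1, Z1) = bezout_pair B1 C1 D1; (Y2, Z2) = bezout_pair B2 C2 D2 in
          ee (of_int (m1 * B1 + n1 * (Y1 * D2 - Z1 * B2)) / of_int D1) *
          ee (of_int (m2 * B2 + n2 * (Y2 * D1 - Z2 * B1)) / of_int D2)) =
       (case kl_key D1 D2 (B1, C1, B2, C2) of (B1, B2, L1, L2) \<Rightarrow>
          ee (of_int (m1 * B1 + n1 * L1) / of_int D1) * ee (of_int (m2 * B2 + n2 * L2) / of_int D2))"
    by (simp only: kl_key_def Let_def split_beta prod.case fst_conv snd_conv)
qed

definition kl_hat_term ::
    "int \<Rightarrow> int \<Rightarrow> int \<Rightarrow> int \<Rightarrow> int \<Rightarrow> int \<Rightarrow> int \<times> int \<times> int \<times> int \<Rightarrow> complex" where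
  "kl_hat_term a u t b D1 D2 = (\<lambda>(B1, B2, L1, L2).
     if [B2 = u] (mod D2) \<and> [L1 = t] (mod D1)
     then ee (of_int (a * B1) / of_int D1) * ee (of_int (b * L2) / of_int D2) else 0)"

lemma ee_sum_orthogonality:
  assumes "D1 > 0" "D2 > 0"
  shows "(\<Sum>x\<in>{0..<D1}. \<Sum>y\<in>{0..<D2}.
      ee (of_int (a * B1 + x * L1) / of_int D1) * ee (of_int (y * B2 + b * L2) / of_int D2) *
      ee (of_int (- x * t) / of_int D1) * ee (of_int (- y * u) / of_int D2))
    = of_int (D1 * D2) * kl_hat_term a u t b D1 D2 (B1, B2, L1, L2)"
proof -
  define c where "c = ee (of_int (a * B1) / of_int D1) * ee (of_int (b * L2) / of_int D2)"
  have split: "ee (of_int (a * B1 + x * L1) / of_int D1) * ee (of_int (y * B2 + b * L2) / of_int D2) *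
      ee (of_int (- x * t) / of_int D1) * ee (of_int (- y * u) / of_int D2)
    = c * (ee (of_int (x * (L1 - t)) / of_int D1) * ee (of_int (y * (B2 - u)) / of_int D2))" for x y
  proof -
    have "of_int (a * B1 + x * L1) / of_int D1 + of_int (y * B2 + b * L2) / of_int D2
        + of_int (- x * t) / of_int D1 + of_int (- y * u) / of_int D2
      = of_int (a * B1) / of_int D1 + of_int (b * L2) / of_int D2
        + (of_int (x * (L1 - t)) / of_int D1 + of_int (y * (B2 - u)) / (of_int D2 :: real))"
      by (simp add: add_divide_distrib diff_divide_distrib algebra_simps)
    then show ?thesis unfolding c_def by (metis ee_add mult.assoc)
  qed
  have "(\<Sum>x\<in>{0..<D1}. \<Sum>y\<in>{0..<D2}.
      c * (ee (of_int (x * (L1 - t)) / of_int D1) * ee (of_int (y * (B2 - u)) / of_int D2)))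
    = c * (\<Sum>x\<in>{0..<D1}. ee (of_int (x * (L1 - t)) / of_int D1))
        * (\<Sum>y\<in>{0..<D2}. ee (of_int (y * (B2 - u)) / of_int D2))"
    by (simp only: mult.assoc sum_product) (simp only: sum_distrib_left)
  also have "\<dots> = of_int (D1 * D2) * kl_hat_term a u t b D1 D2 (B1, B2, L1, L2)"
    using assms unfolding sum_ee_mult_div[OF assms(1)] sum_ee_mult_div[OF assms(2)]
    by (simp add: kl_hat_term_def c_def cong_iff_dvd_diff dvd_diff_commute)
  finally show ?thesis by (simp only: split)
qed

lemma kl3_hat_eq_sum_kl_key:
  assumes "D1 > 0" "D2 > 0"
  shows "kl3_hat a u t b D1 D2 = (\<Sum>z\<in>kl_index D1 D2. kl_hat_term a u t b D1 D2 (kl_key D1 D2 z))"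
proof -
  define G where "G x y k = (case k of (B1, B2, L1, L2) \<Rightarrow>
      ee (of_int (a * B1 + x * L1) / of_int D1) * ee (of_int (y * B2 + b * L2) / of_int D2) *
      ee (of_int (- x * t) / of_int D1) * ee (of_int (- y * u) / of_int D2))" for x y k
  have "kl3_hat a u t b D1 D2 = (1 / of_int (D1 * D2)) *
      (\<Sum>x\<in>{0..<D1}. \<Sum>y\<in>{0..<D2}. \<Sum>z\<in>kl_index D1 D2. G x y (kl_key D1 D2 z))"
    unfolding kl3_hat_def kl3_eq_sum_kl_key G_def sum_distrib_right
    by (intro arg_cong2[where f = "(*)"] refl sum.cong) (simp_all split: prod.split)
  also have "\<dots> = (1 / of_int (D1 * D2)) *
      (\<Sum>x\<in>{0..<D1}. \<Sum>z\<in>kl_index D1 D2. \<Sum>y\<in>{0..<D2}. G x y (kl_key D1 D2 z))"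
    by (intro arg_cong2[where f = "(*)"] refl sum.cong sum.swap)
  also have "\<dots> = (1 / of_int (D1 * D2)) *
      (\<Sum>z\<in>kl_index D1 D2. \<Sum>x\<in>{0..<D1}. \<Sum>y\<in>{0..<D2}. G x y (kl_key D1 D2 z))"
    by (rule arg_cong2[where f = "(*)"], rule refl, rule sum.swap)
  also have "\<dots> = (\<Sum>z\<in>kl_index D1 D2. 1 / of_int (D1 * D2) *
      (\<Sum>x\<in>{0..<D1}. \<Sum>y\<in>{0..<D2}. G x y (kl_key D1 D2 z)))"
    by (rule sum_distrib_left)
  also have "\<dots> = (\<Sum>z\<in>kl_index D1 D2. kl_hat_term a u t b D1 D2 (kl_key D1 D2 z))"
  proof (rule sum.cong[OF refl])
    fix z
    obtain B1 B2 L1 L2 where k: "kl_key D1 D2 z = (B1, B2, L1, L2)" by (cases "kl_key D1 D2 z") auto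
    show "1 / of_int (D1 * D2) * (\<Sum>x\<in>{0..<D1}. \<Sum>y\<in>{0..<D2}. G x y (kl_key D1 D2 z))
        = kl_hat_term a u t b D1 D2 (kl_key D1 D2 z)"
      using assms unfolding k G_def prod.case ee_sum_orthogonality[OF assms] by simp
  qed
  finally show ?thesis .
qed

lemma coupling_lambda2_dvd:
  fixes B1 C1 B2 C2 D1 D2 L :: int
  assumes "D2 \<noteq> 0" and cp: "D1 * D2 dvd D1 * C2 + B1 * B2 + C1 * D2"
    and L: "D2 dvd L * B2 - D1" "D2 dvd L * C2 + B1"
  defines "s \<equiv> (D1 - L * B2) div D2"
  shows "D1 dvd s * C2 + ((B1 + L * C2) div D2) * B2 + C1" and "D1 dvd L * C1 - s * B1"
proof -
  define b where "b = (B1 + L * C2) div D2"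
  have "D2 dvd D1 - L * B2" using L(1) by (metis dvd_minus_iff minus_diff_eq)
  then have es: "D1 = L * B2 + s * D2" unfolding s_def by simp
  have "D2 dvd B1 + L * C2" using L(2) by (simp add: add.commute)
  then have eb: "B1 = b * D2 - L * C2" unfolding b_def by simp
  have "D1 * C2 + B1 * B2 + C1 * D2 = D2 * (s * C2 + b * B2 + C1)"
    by (simp only: es eb) (simp add: algebra_simps)
  then have h: "D1 dvd s * C2 + b * B2 + C1"
    using cp assms(1) by (metis mult.commute dvd_mult_cancel_right)
  then show "D1 dvd s * C2 + ((B1 + L * C2) div D2) * B2 + C1" unfolding b_def .
  have "L * C1 - s * B1 = L * (s * C2 + b * B2 + C1) - b * D1"
    by (simp only: es eb) (simp add: algebra_simps)
  then show "D1 dvd L * C1 - s * B1" using h by (metis dvd_diff dvd_mult dvd_triv_right)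
qed

lemma coupling_lambda2_dvdI:
  fixes B1 C1 B2 C2 D1 D2 L :: int
  assumes "D1 \<noteq> 0" and cp: "D1 * D2 dvd D1 * C2 + B1 * B2 + C1 * D2"
    and L: "D2 dvd L * B2 - D1" "D1 dvd L * C1 - ((D1 - L * B2) div D2) * B1"
  shows "D2 dvd L * C2 + B1"
proof -
  define s where "s = (D1 - L * B2) div D2"
  have "D2 dvd D1 - L * B2" using L(1) by (metis dvd_minus_iff minus_diff_eq)
  then have es: "D1 = L * B2 + s * D2" unfolding s_def by simp
  have "D1 * (L * C2 + B1) = L * (D1 * C2 + B1 * B2 + C1 * D2) - D2 * (L * C1 - s * B1)"
    by (simp only: es) (simp add: algebra_simps)
  moreover have "D1 * D2 dvd D2 * (L * C1 - s * B1)" using L(2) unfolding s_def[symmetric]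
    by (simp add: mult.commute)
  ultimately have "D1 * D2 dvd D1 * (L * C2 + B1)" using cp by (metis dvd_diff dvd_mult)
  then show ?thesis using assms(1) by simp
qed

lemma coupling_gcd_transfer:
  fixes B1 C1 B2 C2 D1 D2 L :: int
  assumes "D2 \<noteq> 0" and g1: "gcd B1 (gcd C1 D1) = 1"
    and cp: "D1 * D2 dvd D1 * C2 + B1 * B2 + C1 * D2"
    and L: "D2 dvd L * B2 - D1" "D2 dvd L * C2 + B1"
  shows "gcd B2 (gcd C2 D2) = 1"
proof (rule gcd3_eq_1I)
  fix d assume d: "d dvd B2" "d dvd C2" "d dvd D2"
  have "d dvd L * B2 - (L * B2 - D1)" by (rule dvd_diff[OF dvd_mult[OF d(1)] dvd_trans[OF d(3) L(1)]])
  then have dD1: "d dvd D1" by simp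
  have dB1: "d dvd B1" using dvd_trans[OF d(3) L(2)] d(2) by (simp add: dvd_add_right_iff)
  have "d dvd C1"
    using dvd_trans[OF dD1 coupling_lambda2_dvd(1)[OF assms(1) cp L]] d(1,2)
    by (simp add: dvd_add_right_iff)
  then show "d dvd 1" using gcd3_eq_1D[OF g1 dB1 _ dD1] by simp
qed

definition coupling_C2 :: "int \<Rightarrow> int \<Rightarrow> int \<Rightarrow> int \<Rightarrow> int \<Rightarrow> int" where
  "coupling_C2 D1 D2 B1 C1 B2 = (- ((B1 * B2 + C1 * D2) div D1)) mod D2"

lemma coupling_C2:
  assumes "D1 dvd B1 * B2 + C1 * D2" "D2 > 0"
  defines "C2 \<equiv> coupling_C2 D1 D2 B1 C1 B2"
  shows "D1 * D2 dvd D1 * C2 + B1 * B2 + C1 * D2" "0 \<le> C2" "C2 < D2"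
proof -
  define w where "w = (B1 * B2 + C1 * D2) div D1"
  have "D2 dvd (- w) - (- w) mod D2" by (rule dvd_minus_mod)
  then have "D2 dvd C2 + w" unfolding C2_def coupling_C2_def w_def[symmetric]
    by (metis dvd_minus_iff minus_diff_eq diff_minus_eq_add add.commute)
  then have "D1 * D2 dvd D1 * (C2 + w)" by simp
  moreover have "D1 * (C2 + w) = D1 * C2 + B1 * B2 + C1 * D2"
    using assms(1) unfolding w_def by (simp add: algebra_simps)
  ultimately show "D1 * D2 dvd D1 * C2 + B1 * B2 + C1 * D2" by simp
  show "0 \<le> C2" "C2 < D2" unfolding C2_def coupling_C2_def using assms(2) by auto
qed

lemma dvd_of_dvd_mult_invertible:
  fixes a a' d n x :: int
  assumes "[a * a' = 1] (mod n)" "d dvd n" "d dvd a * x"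
  shows "d dvd x"
proof -
  have "d dvd a * a' - 1"
    using assms(2) by (rule dvd_trans) (use assms(1) in \<open>simp add: cong_iff_dvd_diff\<close>)
  then have "d dvd a' * (a * x) - (a * a' - 1) * x" by (rule dvd_diff[OF dvd_mult[OF assms(3)] dvd_mult2])
  also have "a' * (a * x) - (a * a' - 1) * x = x" by (simp add: algebra_simps)
  finally show ?thesis .
qed

definition torus_map :: "int \<Rightarrow> int \<Rightarrow> int \<Rightarrow> int \<times> int \<times> int \<times> int \<Rightarrow> int \<times> int \<times> int \<times> int" where
  "torus_map D1 D2 a = (\<lambda>(B1, C1, B2, C2).
     let B1' = (a * B1) mod D1; C1' = (a * C1) mod D1 in (B1', C1', B2, coupling_C2 D1 D2 B1' C1' B2))"

lemma torus_map_kl_index: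
  assumes D: "D1 > 0" "D2 > 0" and inv: "[a * a' = 1] (mod D1)"
    and x: "(B1, C1, B2, C2) \<in> kl_index D1 D2"
  defines "L1 \<equiv> kl_lambda D1 D2 B1 C1 B2" and "L2 \<equiv> kl_lambda D2 D1 B2 C2 B1"
  shows "torus_map D1 D2 a (B1, C1, B2, C2) \<in> kl_index D1 D2"
    "kl_key D1 D2 (torus_map D1 D2 a (B1, C1, B2, C2)) = ((a * B1) mod D1, B2, (a' * L1) mod D1, L2)"
proof -
  have r: "0 \<le> B2" "B2 < D2" and g1: "gcd B1 (gcd C1 D1) = 1"
    and cp: "D1 * D2 dvd D1 * C2 + B1 * B2 + C1 * D2" using x unfolding kl_index_iff by auto
  note F = kl_index_lambda_dvd[OF x, folded L1_def L2_def]
  define s where "s = (D1 - L2 * B2) div D2"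
  have f7: "D1 dvd L2 * C1 - s * B1" using coupling_lambda2_dvd(2)[OF _ cp F(3,4)] D unfolding s_def by simp
  define B1' where "B1' = (a * B1) mod D1"
  define C1' where "C1' = (a * C1) mod D1"
  define C2' where "C2' = coupling_C2 D1 D2 B1' C1' B2"
  have tm: "torus_map D1 D2 a (B1, C1, B2, C2) = (B1', C1', B2, C2')"
    unfolding torus_map_def Let_def B1'_def C1'_def C2'_def by simp
  have eB: "B1' = a * B1 - (a * B1) div D1 * D1" unfolding B1'_def by (simp add: minus_div_mult_eq_mod)
  have eC: "C1' = a * C1 - (a * C1) div D1 * D1" unfolding C1'_def by (simp add: minus_div_mult_eq_mod)
  have "D1 dvd B1 * B2 + C1 * D2" using dvd_mult_left[OF cp] by (metis add.assoc dvd_add_right_iff dvd_triv_left)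
  moreover have "B1' * B2 + C1' * D2
      = a * (B1 * B2 + C1 * D2) - D1 * ((a * B1) div D1 * B2 + (a * C1) div D1 * D2)"
    by (simp only: eB eC) (simp add: algebra_simps)
  ultimately have W: "D1 dvd B1' * B2 + C1' * D2" by (metis dvd_diff dvd_mult dvd_triv_left)
  note CC = coupling_C2[OF W D(2), folded C2'_def]
  have cp': "D1 * D2 dvd D1 * C2' + B1' * B2 + C1' * D2" by (rule CC(1))
  have g1': "gcd B1' (gcd C1' D1) = 1"
  proof (rule gcd3_eq_1I)
    fix d assume d: "d dvd B1'" "d dvd C1'" "d dvd D1"
    have "d dvd a * B1" using d(1) unfolding B1'_def by (simp add: dvd_mod_iff[OF d(3)])
    then have "d dvd B1" by (rule dvd_of_dvd_mult_invertible[OF inv d(3)])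
    have "d dvd a * C1" using d(2) unfolding C1'_def by (simp add: dvd_mod_iff[OF d(3)])
    then have "d dvd C1" by (rule dvd_of_dvd_mult_invertible[OF inv d(3)])
    with \<open>d dvd B1\<close> show "d dvd 1" using gcd3_eq_1D[OF g1 _ _ d(3)] by simp
  qed
  have "L2 * C1' - s * B1'
      = a * (L2 * C1 - s * B1) - D1 * (L2 * ((a * C1) div D1) - s * ((a * B1) div D1))"
    by (simp only: eB eC) (simp add: algebra_simps)
  then have "D1 dvd L2 * C1' - s * B1'" using f7 by (metis dvd_diff dvd_mult dvd_triv_left)
  then have f4': "D2 dvd L2 * C2' + B1'"
    using coupling_lambda2_dvdI[OF _ cp' F(3)] D unfolding s_def by simp
  have g2': "gcd B2 (gcd C2' D2) = 1" using coupling_gcd_transfer[OF _ g1' cp' F(3) f4'] D by simp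
  have "0 \<le> B1'" "B1' < D1" "0 \<le> C1'" "C1' < D1" unfolding B1'_def C1'_def using D by auto
  then show "torus_map D1 D2 a (B1, C1, B2, C2) \<in> kl_index D1 D2"
    unfolding tm kl_index_iff using r CC(2,3) g1' g2' cp' by simp
  have aa: "D1 dvd a * a' - 1" using inv by (simp add: cong_iff_dvd_diff)
  define mu where "mu = (a' * L1) mod D1"
  have emu: "mu = a' * L1 - (a' * L1) div D1 * D1" unfolding mu_def by (simp add: minus_div_mult_eq_mod)
  have "kl_lambda D1 D2 B1' C1' B2 = mu"
  proof (rule kl_lambda_eqI[OF g1'])
    show "0 \<le> mu" "mu < D1" unfolding mu_def using D by auto
    have "mu * B1' - D2 = (a * a') * (L1 * B1 - D2) + (a * a' - 1) * D2
        - D1 * ((a' * L1) div D1 * B1' + a' * L1 * ((a * B1) div D1))"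
      by (simp only: emu eB) (simp add: algebra_simps)
    then show "D1 dvd mu * B1' - D2"
      using F(1) aa by (metis dvd_add dvd_diff dvd_mult dvd_mult2 dvd_triv_left)
    have "mu * C1' + B2 = (a * a') * (L1 * C1 + B2) - (a * a' - 1) * B2
        - D1 * ((a' * L1) div D1 * C1' + a' * L1 * ((a * C1) div D1))"
      by (simp only: emu eC) (simp add: algebra_simps)
    then show "D1 dvd mu * C1' + B2"
      using F(2) aa by (metis dvd_diff dvd_mult dvd_mult2 dvd_triv_left)
  qed
  moreover have "kl_lambda D2 D1 B2 C2' B1' = L2"
    using kl_lambda_eqI[OF g2' _ _ F(3) f4'] kl_lambda_bounds[OF D(2)] unfolding L2_def by simp
  ultimately show "kl_key D1 D2 (torus_map D1 D2 a (B1, C1, B2, C2)) = ((a * B1) mod D1, B2, (a' * L1) mod D1, L2)"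
    unfolding tm kl_key_def mu_def B1'_def by simp
qed

lemma torus_map_inverse:
  assumes D: "D1 > 0" "D2 > 0" and inv: "[a * a' = 1] (mod D1)" and x: "x \<in> kl_index D1 D2"
  shows "torus_map D1 D2 a' (torus_map D1 D2 a x) = x"
proof -
  obtain B1 C1 B2 C2 where xe: "x = (B1, C1, B2, C2)" by (cases x) auto
  have inv': "[a' * a = 1] (mod D1)" using inv by (simp add: mult.commute)
  have y: "torus_map D1 D2 a x \<in> kl_index D1 D2" using torus_map_kl_index(1)[OF D inv] x xe by simp
  obtain C2'' where e: "torus_map D1 D2 a' (torus_map D1 D2 a x) = (B1, C1, B2, C2'')"
    using x unfolding xe kl_index_iff torus_map_def Let_def
    by (simp add: mod_mult_inverse_cancel[OF inv])
  have "torus_map D1 D2 a' (torus_map D1 D2 a x) \<in> kl_index D1 D2"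
    using y torus_map_kl_index(1)[OF D inv'] by (cases "torus_map D1 D2 a x") auto
  then have "(B1, C1, B2, C2'') \<in> kl_index D1 D2" by (simp only: e)
  then have "C2 = C2''" using kl_index_C2_unique[OF _ _ D(1)] x xe by blast
  then show ?thesis using e xe by simp
qed

lemma sum_kl_key_torus:
  assumes D: "D1 > 0" "D2 > 0" and inv: "[a * a' = 1] (mod D1)"
  shows "(\<Sum>x\<in>kl_index D1 D2. h (kl_key D1 D2 x))
    = (\<Sum>x\<in>kl_index D1 D2. h (case kl_key D1 D2 x of (B1, B2, L1, L2) \<Rightarrow>
         ((a * B1) mod D1, B2, (a' * L1) mod D1, L2)))"
proof -
  have inv': "[a' * a = 1] (mod D1)" using inv by (simp add: mult.commute)
  have maps: "torus_map D1 D2 c ` kl_index D1 D2 \<subseteq> kl_index D1 D2" if "[c * c' = 1] (mod D1)" for c c'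
    using torus_map_kl_index(1)[OF D that] by force
  have "bij_betw (torus_map D1 D2 a) (kl_index D1 D2) (kl_index D1 D2)"
    by (rule bij_betw_byWitness[where f' = "torus_map D1 D2 a'"])
      (use torus_map_inverse[OF D inv] torus_map_inverse[OF D inv'] maps[OF inv] maps[OF inv'] in auto)
  then have "(\<Sum>x\<in>kl_index D1 D2. h (kl_key D1 D2 x))
      = (\<Sum>x\<in>kl_index D1 D2. h (kl_key D1 D2 (torus_map D1 D2 a x)))"
    by (rule sum.reindex_bij_betw[symmetric])
  also have "\<dots> = (\<Sum>x\<in>kl_index D1 D2. h (case kl_key D1 D2 x of (B1, B2, L1, L2) \<Rightarrow>
         ((a * B1) mod D1, B2, (a' * L1) mod D1, L2)))"
    by (rule sum.cong[OF refl], clarify, subst torus_map_kl_index(2)[OF D inv]) (simp_all add: kl_key_def)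
  finally show ?thesis .
qed

lemma kl3_hat_twist:
  assumes D: "D1 > 0" "D2 > 0" and inv: "[a * a' = 1] (mod D1)"
  shows "kl3_hat a v t 1 D1 D2 = kl3_hat 1 v (a' * t) 1 D1 D2"
proof -
  have "coprime a' D1" using inv by (auto simp: coprime_iff_invertible_int mult.commute)
  then have "[(a' * L1) mod D1 = a' * t] (mod D1) \<longleftrightarrow> [L1 = t] (mod D1)" for L1
    by (simp add: cong_mult_lcancel)
  moreover have "ee (of_int ((a * B1) mod D1) / of_int D1) = ee (of_int (a * B1) / of_int D1)" for B1
    by (rule ee_cong) simp
  ultimately have "kl_hat_term 1 v (a' * t) 1 D1 D2 ((a * B1) mod D1, B2, (a' * L1) mod D1, L2)
      = kl_hat_term a v t 1 D1 D2 (B1, B2, L1, L2)" for B1 B2 L1 L2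
    by (simp add: kl_hat_term_def)
  then show ?thesis
    unfolding kl3_hat_eq_sum_kl_key[OF D] sum_kl_key_torus[OF D inv, of "kl_hat_term 1 v (a' * t) 1 D1 D2"]
    by (simp add: case_prod_beta)
qed

lemma kl3_hat_twist_coprime:
  assumes D: "D1 > 0" "D2 > 0" and "coprime a D1"
  obtains a' where "coprime a' D1" "\<And>v t. kl3_hat a v t 1 D1 D2 = kl3_hat 1 v (a' * t) 1 D1 D2"
proof -
  obtain a' where inv: "[a * a' = 1] (mod D1)" using assms(3)[unfolded coprime_iff_invertible_int] by blast
  then have "coprime a' D1" unfolding coprime_iff_invertible_int by (auto simp: mult.commute)
  then show thesis using kl3_hat_twist[OF D inv] by (rule that)
qed

lemma kl3_hat_mod:
  assumes "D1 > 0" "D2 > 0"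
  shows "kl3_hat a v (t mod D1) b D1 D2 = kl3_hat a v t b D1 D2"
  unfolding kl3_hat_eq_sum_kl_key[OF assms] kl_hat_term_def by simp

lemma sum_norm_kl3_hat_twist:
  assumes D: "D1 > 0" "D2 > 0" and "coprime a D1"
  shows "(\<Sum>t\<in>{0..<D1}. cmod (kl3_hat a v t 1 D1 D2)) = (\<Sum>t\<in>{0..<D1}. cmod (kl3_hat 1 v t 1 D1 D2))"
proof -
  obtain a' where inv: "[a * a' = 1] (mod D1)" using assms(3)[unfolded coprime_iff_invertible_int] by blast
  have inv': "[a' * a = 1] (mod D1)" using inv by (simp add: mult.commute)
  have "bij_betw (\<lambda>t. (a' * t) mod D1) {0..<D1} {0..<D1}"
    by (rule bij_betw_byWitness[where f' = "\<lambda>t. (a * t) mod D1"])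
      (use mod_mult_inverse_cancel[OF inv] mod_mult_inverse_cancel[OF inv'] D in auto)
  then have "(\<Sum>t\<in>{0..<D1}. cmod (kl3_hat 1 v ((a' * t) mod D1) 1 D1 D2))
      = (\<Sum>t\<in>{0..<D1}. cmod (kl3_hat 1 v t 1 D1 D2))"
    by (rule sum.reindex_bij_betw)
  then show ?thesis by (simp add: kl3_hat_twist[OF D inv] kl3_hat_mod[OF D])
qed

text \<open>
  With \<open>D\<^sub>1 = \<lambda>\<^sub>2B\<^sub>2 + sD\<^sub>2\<close>, the new \<open>C\<^sub>1'\<close> solves \<open>C\<^sub>1'B\<^sub>1 \<equiv> -\<lambda>\<^sub>2\<close>, \<open>C\<^sub>1'C\<^sub>1 \<equiv> -s (mod D\<^sub>1)\<close>.
  The same recipe applied to the image returns \<open>C\<^sub>1\<close>, so the map is an involution.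
\<close>
definition dual_map :: "int \<Rightarrow> int \<Rightarrow> int \<times> int \<times> int \<times> int \<Rightarrow> int \<times> int \<times> int \<times> int" where
  "dual_map D1 D2 = (\<lambda>(B1, C1, B2, C2).
     let L1 = kl_lambda D1 D2 B1 C1 B2; L2 = kl_lambda D2 D1 B2 C2 B1;
         C1' = kl_lambda D1 (- L2) B1 C1 ((D1 - L2 * B2) div D2)
     in (L1, C1', L2, coupling_C2 D1 D2 L1 C1' L2))"

lemma dual_C1_props:
  fixes B1 C1 B2 C2 D1 D2 L1 L2 :: int
  assumes "D2 \<noteq> 0" and g1: "gcd B1 (gcd C1 D1) = 1"
    and cp: "D1 * D2 dvd D1 * C2 + B1 * B2 + C1 * D2"
    and F: "D1 dvd L1 * B1 - D2" "D1 dvd L1 * C1 + B2" "D2 dvd L2 * B2 - D1" "D2 dvd L2 * C2 + B1"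
  defines "s \<equiv> (D1 - L2 * B2) div D2"
    and "C1' \<equiv> kl_lambda D1 (- L2) B1 C1 ((D1 - L2 * B2) div D2)"
  shows "D1 dvd C1' * B1 + L2" "D1 dvd C1' * C1 + s" "gcd L1 (gcd C1' D1) = 1"
proof -
  have f6: "D1 dvd s * C2 + ((B1 + L2 * C2) div D2) * B2 + C1"
    using coupling_lambda2_dvd(1)[OF assms(1) cp F(3,4)] unfolding s_def .
  have "D1 dvd L2 * C1 - s * B1"
    using coupling_lambda2_dvd(2)[OF assms(1) cp F(3,4)] unfolding s_def .
  then have "D1 dvd B1 * s + C1 * - L2" by (simp add: dvd_diff_commute algebra_simps)
  from kl_lambda_dvd[OF g1 this]
  show a: "D1 dvd C1' * B1 + L2" and b: "D1 dvd C1' * C1 + s"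
    unfolding C1'_def s_def[symmetric] by simp_all
  show "gcd L1 (gcd C1' D1) = 1"
  proof (rule gcd3_eq_1I)
    fix d assume d: "d dvd L1" "d dvd C1'" "d dvd D1"
    have ds: "d dvd s" using dvd_trans[OF d(3) b] d(2) by (simp add: dvd_add_right_iff)
    have dL2: "d dvd L2" using dvd_trans[OF d(3) a] d(2) by (simp add: dvd_add_right_iff)
    have dB2: "d dvd B2" using dvd_trans[OF d(3) F(2)] d(1) by (simp add: dvd_add_right_iff)
    have "d dvd L1 * B1 - (L1 * B1 - D2)" by (rule dvd_diff[OF dvd_mult2[OF d(1)] dvd_trans[OF d(3) F(1)]])
    then have dD2: "d dvd D2" by simp
    have dB1: "d dvd B1" using dvd_trans[OF dD2 F(4)] dL2 by (simp add: dvd_add_right_iff)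
    have "d dvd C1" using dvd_trans[OF d(3) f6] ds dB2 by (simp add: dvd_add_right_iff)
    then show "d dvd 1" using gcd3_eq_1D[OF g1 dB1 _ d(3)] by simp
  qed
qed

lemma dual_map_kl_index:
  assumes D: "D1 > 0" "D2 > 0" and x: "(B1, C1, B2, C2) \<in> kl_index D1 D2"
  defines "L1 \<equiv> kl_lambda D1 D2 B1 C1 B2" and "L2 \<equiv> kl_lambda D2 D1 B2 C2 B1"
  shows "dual_map D1 D2 (B1, C1, B2, C2) \<in> kl_index D1 D2"
    "kl_key D1 D2 (dual_map D1 D2 (B1, C1, B2, C2)) = (L1, L2, B1, B2)"
    "kl_lambda D1 (- B2) L1 (fst (snd (dual_map D1 D2 (B1, C1, B2, C2)))) ((D1 - B2 * L2) div D2) = C1"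
proof -
  have r: "0 \<le> B1" "B1 < D1" "0 \<le> C1" "C1 < D1" "0 \<le> B2" "B2 < D2" and g1: "gcd B1 (gcd C1 D1) = 1"
    and cp: "D1 * D2 dvd D1 * C2 + B1 * B2 + C1 * D2" using x unfolding kl_index_iff by auto
  note F = kl_index_lambda_dvd[OF x, folded L1_def L2_def]
  define s where "s = (D1 - L2 * B2) div D2"
  define C1' where "C1' = kl_lambda D1 (- L2) B1 C1 s"
  have D0: "D1 \<noteq> 0" "D2 \<noteq> 0" using D by simp_all
  note C = dual_C1_props[OF D0(2) g1 cp F, folded s_def, folded C1'_def]
  define C2' where "C2' = coupling_C2 D1 D2 L1 C1' L2"
  have dm: "dual_map D1 D2 (B1, C1, B2, C2) = (L1, C1', L2, C2')"
    unfolding dual_map_def Let_def L1_def L2_def s_def C1'_def C2'_def by simp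
  have "L1 * L2 + C1' * D2 = L1 * (C1' * B1 + L2) - C1' * (L1 * B1 - D2)"
    by (simp add: algebra_simps)
  then have "D1 dvd L1 * L2 + C1' * D2" using C(1) F(1) D by (metis dvd_diff dvd_mult)
  note CC = coupling_C2[OF this D(2), folded C2'_def]
  have F3': "D2 dvd B2 * L2 - D1" using F(3) by (simp add: mult.commute)
  have "B2 * C1' - s * L1 = C1' * (L1 * C1 + B2) - L1 * (C1' * C1 + s)"
    by (simp add: algebra_simps)
  then have "D1 dvd B2 * C1' - ((D1 - B2 * L2) div D2) * L1"
    using C(2) F(2) unfolding s_def by (metis dvd_diff dvd_mult mult.commute)
  note e = coupling_lambda2_dvdI[OF D0(1) CC(1) F3' this]
  have g2: "gcd L2 (gcd C2' D2) = 1" by (rule coupling_gcd_transfer[OF D0(2) C(3) CC(1) F3' e])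
  show "dual_map D1 D2 (B1, C1, B2, C2) \<in> kl_index D1 D2"
    using kl_lambda_bounds D CC(1-3) C(3) g2
    unfolding dm kl_index_iff L1_def L2_def C1'_def by simp
  have "kl_lambda D1 D2 L1 C1' L2 = B1"
    by (rule kl_lambda_eqI[OF C(3) r(1,2)]) (use F(1) C(1) in \<open>simp_all add: mult.commute\<close>)
  moreover have "kl_lambda D2 D1 L2 C2' L1 = B2" by (rule kl_lambda_eqI[OF g2 r(5,6) F3' e])
  ultimately show "kl_key D1 D2 (dual_map D1 D2 (B1, C1, B2, C2)) = (L1, L2, B1, B2)"
    unfolding dm kl_key_def by simp
  show "kl_lambda D1 (- B2) L1 (fst (snd (dual_map D1 D2 (B1, C1, B2, C2)))) ((D1 - B2 * L2) div D2) = C1"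
    unfolding dm fst_conv snd_conv
    by (rule kl_lambda_eqI[OF C(3) r(3,4)]) (use F(2) C(2) in \<open>simp_all add: s_def mult.commute\<close>)
qed

lemma dual_map_involution:
  assumes D: "D1 > 0" "D2 > 0" and x: "x \<in> kl_index D1 D2"
  shows "dual_map D1 D2 (dual_map D1 D2 x) = x"
proof -
  obtain B1 C1 B2 C2 where xe: "x = (B1, C1, B2, C2)" by (cases x) auto
  define L1 where "L1 = kl_lambda D1 D2 B1 C1 B2"
  define L2 where "L2 = kl_lambda D2 D1 B2 C2 B1"
  obtain C1' C2' where dm: "dual_map D1 D2 x = (L1, C1', L2, C2')"
    unfolding xe dual_map_def Let_def L1_def L2_def by simp
  note P = dual_map_kl_index[OF D x[unfolded xe], folded xe L1_def L2_def, unfolded dm]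
  obtain C2'' where "dual_map D1 D2 (dual_map D1 D2 x) = (B1, C1, B2, C2'')"
    using P(2,3) unfolding dm by (simp add: dual_map_def Let_def kl_key_def)
  moreover have "dual_map D1 D2 (L1, C1', L2, C2') \<in> kl_index D1 D2"
    using dual_map_kl_index(1)[OF D P(1)] .
  ultimately have "(B1, C1, B2, C2'') \<in> kl_index D1 D2" unfolding dm by simp
  then have "C2 = C2''" using kl_index_C2_unique[OF _ _ D(1)] x xe by blast
  with \<open>dual_map D1 D2 (dual_map D1 D2 x) = (B1, C1, B2, C2'')\<close> show ?thesis using xe by simp
qed

lemma sum_kl_key_dual:
  assumes D: "D1 > 0" "D2 > 0"
  shows "(\<Sum>x\<in>kl_index D1 D2. h (kl_key D1 D2 x))
    = (\<Sum>x\<in>kl_index D1 D2. h (case kl_key D1 D2 x of (B1, B2, L1, L2) \<Rightarrow> (L1, L2, B1, B2)))"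
proof -
  have "bij_betw (dual_map D1 D2) (kl_index D1 D2) (kl_index D1 D2)"
    by (rule bij_betw_byWitness[where f' = "dual_map D1 D2"])
      (use dual_map_involution[OF D] dual_map_kl_index(1)[OF D] in force)+
  then have "(\<Sum>x\<in>kl_index D1 D2. h (kl_key D1 D2 x))
      = (\<Sum>x\<in>kl_index D1 D2. h (kl_key D1 D2 (dual_map D1 D2 x)))"
    by (rule sum.reindex_bij_betw[symmetric])
  also have "\<dots> = (\<Sum>x\<in>kl_index D1 D2. h (case kl_key D1 D2 x of (B1, B2, L1, L2) \<Rightarrow> (L1, L2, B1, B2)))"
    by (rule sum.cong[OF refl], clarify, subst dual_map_kl_index(2)[OF D]) (simp_all add: kl_key_def)
  finally show ?thesis .
qed

lemma kl_index_swap: "(B2, C2, B1, C1) \<in> kl_index D2 D1 \<longleftrightarrow> (B1, C1, B2, C2) \<in> kl_index D1 D2"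
  unfolding kl_index_iff by (auto simp: ac_simps)

lemma sum_kl_key_swap:
  "(\<Sum>x\<in>kl_index D2 D1. h (kl_key D2 D1 x))
    = (\<Sum>x\<in>kl_index D1 D2. h (case kl_key D1 D2 x of (B1, B2, L1, L2) \<Rightarrow> (B2, B1, L2, L1)))"
proof -
  have "bij_betw (\<lambda>(B1, C1, B2, C2). (B2, C2, B1, C1)) (kl_index D1 D2) (kl_index D2 D1)"
    by (rule bij_betw_byWitness[where f' = "\<lambda>(B1, C1, B2, C2). (B2, C2, B1, C1)"])
      (auto simp: kl_index_swap)
  from sum.reindex_bij_betw[OF this, of "\<lambda>x. h (kl_key D2 D1 x)", symmetric] show ?thesis
    by (simp add: kl_key_def case_prod_beta)
qed

lemma kl3_hat_dual:
  assumes "D1 > 0" "D2 > 0"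
  shows "kl3_hat 1 t w 1 D2 D1 = kl3_hat 1 w t 1 D1 D2"
proof -
  have "kl3_hat 1 t w 1 D2 D1 = (\<Sum>x\<in>kl_index D2 D1. kl_hat_term 1 t w 1 D2 D1 (kl_key D2 D1 x))"
    by (rule kl3_hat_eq_sum_kl_key[OF assms(2,1)])
  also have "\<dots> = (\<Sum>x\<in>kl_index D1 D2. kl_hat_term 1 t w 1 D2 D1
      (case kl_key D1 D2 x of (B1, B2, L1, L2) \<Rightarrow> (B2, B1, L2, L1)))"
    by (rule sum_kl_key_swap)
  also have "\<dots> = (\<Sum>x\<in>kl_index D1 D2. kl_hat_term 1 t w 1 D2 D1
      (case case kl_key D1 D2 x of (B1, B2, L1, L2) \<Rightarrow> (L1, L2, B1, B2) of
        (B1, B2, L1, L2) \<Rightarrow> (B2, B1, L2, L1)))"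
    by (rule sum_kl_key_dual[OF assms])
  also have "\<dots> = (\<Sum>x\<in>kl_index D1 D2. kl_hat_term 1 w t 1 D1 D2 (kl_key D1 D2 x))"
    by (rule sum.cong) (auto simp: kl_hat_term_def split: prod.split)
  also have "\<dots> = kl3_hat 1 w t 1 D1 D2"
    by (rule kl3_hat_eq_sum_kl_key[OF assms, symmetric])
  finally show ?thesis .
qed

theorem lemma5:
  fixes u D1 D2 :: int
  assumes "D1 > 0" and "D2 > 0"
  shows "RR' u D1 D2 = RR u D2 D1"
proof -
  note D = assms
  define P where "P a b = (\<Sum>t\<in>{0..<D1}. cmod (kl3_hat a (b * u) t 1 D1 D2))" for a b
  define Q where "Q a b = (\<Sum>v\<in>{0..<D1}. cmod (kl3_hat a v (b * u) 1 D2 D1))" for a b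
  have PQ: "P a b = Q 1 b" if "coprime a D1" for a b
    unfolding P_def Q_def sum_norm_kl3_hat_twist[OF D that]
    by (intro sum.cong refl arg_cong[where f = cmod] kl3_hat_dual[OF D, symmetric])
  have "{P a b | a b. coprime a D1 \<and> coprime b D2} = {Q a b | a b. coprime a D2 \<and> coprime b D2}"
  proof (intro equalityI subsetI)
    fix x assume "x \<in> {P a b | a b. coprime a D1 \<and> coprime b D2}"
    then obtain a b where "x = P a b" "coprime a D1" "coprime b D2" by blast
    then have "x = Q 1 b" "coprime (1::int) D2" "coprime b D2" using PQ by simp_all
    then show "x \<in> {Q a b | a b. coprime a D2 \<and> coprime b D2}" by blast
  next
    fix x assume "x \<in> {Q a b | a b. coprime a D2 \<and> coprime b D2}"
    then obtain a b where x: "x = Q a b" "coprime a D2" "coprime b D2" by blast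
    obtain a' where "coprime a' D2" "\<And>v w. kl3_hat a v w 1 D2 D1 = kl3_hat 1 v (a' * w) 1 D2 D1"
      using kl3_hat_twist_coprime[OF D(2,1) x(2)] by blast
    then have "coprime a' D2" "x = Q 1 (a' * b)" unfolding x(1) Q_def by (simp_all add: mult.assoc)
    then have "x = P 1 (a' * b)" "coprime (1::int) D1" "coprime (a' * b) D2"
      using PQ[of 1] x(3) by simp_all
    then show "x \<in> {P a b | a b. coprime a D1 \<and> coprime b D2}" by blast
  qed
  then show ?thesis unfolding RR'_def RR_def P_def Q_def by simp
qed

end
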